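(* Let $X$ and $Y$ be complex Banach spaces and $\mathcal{A}=L(Y)$ the algebra of bounded linear operators on $Y$. Let $\mathcal{F}=\{F_t\}_{t\ge0}$ be a semigroup of holomorphic self-mappings of a domain $\mathcal{D}\subset X$, and let $\{\Gamma_t\}_{t\ge0}$ be a family of holomorphic maps $\mathcal{D}\to\mathcal{A}$. Then $\{\Gamma_t\}_{t\ge0}$ is a semicocycle over $\mathcal{F}$ if and only if the family $\widetilde{\mathcal F}=\{\widetilde F_t\}_{t\ge0}$, $\widetilde F_t(x,y)=(F_t(x),\Gamma_t(x)y)$, is a semigroup on the domain $\mathcal{D}\times Y$. If, in addition, there are a biholomorphic map $h$ of $\mathcal{D}$ onto $h(\mathcal{D})\subset X$ and a bounded linear operator $A$ on $X$ with $F_t(x)=h^{-1}(e^{tA}h(x))$ for all $t\ge0$, $x\in\mathcal{D}$, and there are a holomorphic $M:\mathcal{D}\to\mathcal{A}_*$ and $B_0\in\mathcal{A}$ with $\Gamma_t(x)=M(F_t(x))^{-1}e^{tB_0}M(x)$ for all $t,x$, then $\widetilde{\mathcal F}$ is linearized by $\widetilde h(x,y)=(h(x),M(x)y)$, i.e. $\widetilde F_t(x,y)=\widetilde h^{-1}\big(e^{tA}h(x),\,e^{tB_0}M(x)y\big)$ for all $t\ge0$, $(x,y)\in\mathcal{D}\times Y$.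
   Context: $\mathcal{A}_*$ denotes the invertible elements of $\mathcal{A}$. A semigroup on a domain $\Omega$ is a family $\{G_t\}_{t\ge0}$ of holomorphic self-maps of $\Omega$ with $G_{t+s}=G_t\circ G_s$ for $t,s\ge0$ and $G_t(w)\to w$ as $t\to0^+$ for each $w\in\Omega$. A semicocycle over $\mathcal{F}$ is a family $\{\Gamma_t\}_{t\ge0}$ of holomorphic maps $\mathcal{D}\to\mathcal{A}$ with $\Gamma_t(F_s(x))\Gamma_s(x)=\Gamma_{t+s}(x)$ for all $t,s\ge0$, $x\in\mathcal{D}$, and $\Gamma_t(x)\to\mathrm{Id}_Y$ as $t\to0^+$ for each $x$. *)

theory Defs
  imports "HOL-Analysis.Analysis"
begin

text \<open>A complex Banach space is encoded as a real Banach space (type class banach)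
together with a complex structure J (multiplication by the imaginary unit):
J is real-linear and bounded, J o J = -id, and the norm is invariant under
multiplication by unimodular scalars e^{i theta}, i.e. (cos theta + i sin theta) x.\<close>

definition complex_structure :: "('a::real_normed_vector \<Rightarrow> 'a) \<Rightarrow> bool" where
  "complex_structure J \<longleftrightarrow> bounded_linear J \<and> (\<forall>x. J (J x) = - x) \<and>
     (\<forall>\<theta> x. norm (cos \<theta> *\<^sub>R x + sin \<theta> *\<^sub>R J x) = norm x)"

definition prod_cs :: "('a \<Rightarrow> 'a) \<Rightarrow> ('b \<Rightarrow> 'b) \<Rightarrow> ('a \<times> 'b \<Rightarrow> 'a \<times> 'b)" where
  "prod_cs JX JY = (\<lambda>(x, y). (JX x, JY y))"

definition op_cs :: "('b::real_normed_vector \<Rightarrow> 'b) \<Rightarrow> ('b \<Rightarrow>\<^sub>L 'b) \<Rightarrow> ('b \<Rightarrow>\<^sub>L 'b)" where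
  "op_cs JY = (\<lambda>T. Blinfun (\<lambda>v. JY (blinfun_apply T v)))"

text \<open>Complex-linear bounded operators on Y, i.e. the elements of the algebra L(Y).\<close>

definition clinear_op :: "('b::real_normed_vector \<Rightarrow> 'b) \<Rightarrow> ('b \<Rightarrow>\<^sub>L 'b) \<Rightarrow> bool" where
  "clinear_op JY T \<longleftrightarrow> (\<forall>v. blinfun_apply T (JY v) = JY (blinfun_apply T v))"

definition cholomorphic_on ::
  "('a::real_normed_vector \<Rightarrow> 'a) \<Rightarrow> ('b::real_normed_vector \<Rightarrow> 'b) \<Rightarrow> ('a \<Rightarrow> 'b) \<Rightarrow> 'a set \<Rightarrow> bool" where
  "cholomorphic_on JA JB f S \<longleftrightarrow>
     (\<forall>x\<in>S. \<exists>L. (f has_derivative L) (at x) \<and> (\<forall>v. L (JA v) = JB (L v)))"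

definition cdomain :: "'a::real_normed_vector set \<Rightarrow> bool" where
  "cdomain D \<longleftrightarrow> open D \<and> connected D \<and> D \<noteq> {}"

definition hsemigroup :: "('a::real_normed_vector \<Rightarrow> 'a) \<Rightarrow> 'a set \<Rightarrow> (real \<Rightarrow> 'a \<Rightarrow> 'a) \<Rightarrow> bool" where
  "hsemigroup J \<Omega> G \<longleftrightarrow>
     (\<forall>t\<ge>0. cholomorphic_on J J (G t) \<Omega> \<and> G t ` \<Omega> \<subseteq> \<Omega>) \<and>
     (\<forall>t\<ge>0. \<forall>s\<ge>0. \<forall>w\<in>\<Omega>. G (t + s) w = G t (G s w)) \<and>
     (\<forall>w\<in>\<Omega>. ((\<lambda>t. G t w) \<longlongrightarrow> w) (at_right 0))"

text \<open>Semicocycle over a semigroup F on D with values in L(Y). The convergence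
Gamma_t(x) \<rightarrow> Id_Y is taken in the strong operator topology.\<close>

definition semicocycle ::
  "'a set \<Rightarrow> (real \<Rightarrow> 'a \<Rightarrow> 'a) \<Rightarrow> (real \<Rightarrow> 'a \<Rightarrow> ('b::real_normed_vector \<Rightarrow>\<^sub>L 'b)) \<Rightarrow> bool" where
  "semicocycle D F \<Gamma> \<longleftrightarrow>
     (\<forall>t\<ge>0. \<forall>s\<ge>0. \<forall>x\<in>D. \<Gamma> t (F s x) o\<^sub>L \<Gamma> s x = \<Gamma> (t + s) x) \<and>
     (\<forall>x\<in>D. \<forall>y. ((\<lambda>t. blinfun_apply (\<Gamma> t x) y) \<longlongrightarrow> y) (at_right 0))"

primrec op_pow :: "('b::real_normed_vector \<Rightarrow>\<^sub>L 'b) \<Rightarrow> nat \<Rightarrow> ('b \<Rightarrow>\<^sub>L 'b)" where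
  "op_pow T 0 = id_blinfun"
| "op_pow T (Suc n) = T o\<^sub>L op_pow T n"

definition op_exp :: "('b::banach \<Rightarrow>\<^sub>L 'b) \<Rightarrow> ('b \<Rightarrow>\<^sub>L 'b)" where
  "op_exp T = (\<Sum>n. (1 / fact n) *\<^sub>R op_pow T n)"

definition op_invertible :: "('b::real_normed_vector \<Rightarrow>\<^sub>L 'b) \<Rightarrow> bool" where
  "op_invertible T \<longleftrightarrow> (\<exists>S. S o\<^sub>L T = id_blinfun \<and> T o\<^sub>L S = id_blinfun)"

definition op_inv :: "('b::real_normed_vector \<Rightarrow>\<^sub>L 'b) \<Rightarrow> ('b \<Rightarrow>\<^sub>L 'b)" where
  "op_inv T = (THE S. S o\<^sub>L T = id_blinfun \<and> T o\<^sub>L S = id_blinfun)"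

definition biholomorphic_onto :: "('a::real_normed_vector \<Rightarrow> 'a) \<Rightarrow> ('a \<Rightarrow> 'a) \<Rightarrow> 'a set \<Rightarrow> bool" where
  "biholomorphic_onto J h D \<longleftrightarrow> cholomorphic_on J J h D \<and> inj_on h D \<and> open (h ` D) \<and>
     cholomorphic_on J J (inv_into D h) (h ` D)"

end

theory Submission
  imports Defs
begin

(* The skew product (x, y) \<mapsto> (F_t x, \<Gamma>_t(x) y) is holomorphic whenever F_t and \<Gamma>_t are,
   and its semigroup law and continuity at t = 0 split coordinatewise into those of F together
   with the cocycle identity and the strong continuity of \<Gamma>.

   For the linearization the only issue is that F_t is given through inv_into, which is meaningful
   only if e^{tA} maps h(D) into h(D). By connectedness of D, for each t either this holds or F_t is
   constant (inv_into returns its junk value everywhere). In the first case F_t is injective, so if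
   F_{2s} is constant then so is F_s. Hence one constant F_t with t > 0 makes every F_{t/2^k}
   constant, contradicting F_s \<rightarrow> id as s \<rightarrow> 0+ on an open set with two distinct points.
   Injectivity of e^{tA} comes from e^{aT} e^{bT} = e^{(a+b)T}, proved by a Cauchy product for an
   arbitrary bounded bilinear map. *)

lemma bounded_bilinear_Cauchy_product_sums:
  fixes a :: "nat \<Rightarrow> 'a::banach" and b :: "nat \<Rightarrow> 'b::banach"
    and prod :: "'a \<Rightarrow> 'b \<Rightarrow> 'c::banach"
  assumes prod: "bounded_bilinear prod"
    and a: "summable (\<lambda>i. norm (a i))" and b: "summable (\<lambda>j. norm (b j))"
  shows "(\<lambda>k. \<Sum>i\<le>k. prod (a i) (b (k - i))) sums prod (suminf a) (suminf b)"
proof -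
  interpret bounded_bilinear prod by (rule prod)
  obtain K where K: "\<And>x y. norm (prod x y) \<le> norm x * norm y * K"
    using bounded by blast
  have has_sum_a: "(a has_sum suminf a) UNIV"
    using a by (simp add: norm_summable_imp_has_sum summable_norm_cancel summable_sums)
  have has_sum_b: "(b has_sum suminf b) UNIV"
    using b by (simp add: norm_summable_imp_has_sum summable_norm_cancel summable_sums)
  define g where "g = (\<lambda>(i, j). prod (a i) (b j))"
  have has_sum_norm_b: "((\<lambda>j. norm (b j)) has_sum (\<Sum>j. norm (b j))) UNIV"
    using b by (simp add: sums_nonneg_imp_has_sum summable_sums)
  have "(\<lambda>(i, j). norm (a i) * norm (b j)) summable_on UNIV \<times> UNIV"
    using has_sum_cmult_right[OF has_sum_norm_b]
      summable_on_cmult_left[OF summable_nonneg_imp_summable_on[OF a]]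
    by (intro summable_on_SigmaI[where g = "\<lambda>i. norm (a i) * (\<Sum>j. norm (b j))"]) auto
  then have "(\<lambda>p. norm (g p)) summable_on UNIV \<times> UNIV"
    by (rule summable_on_comparison_test[OF summable_on_cmult_left[where c = K]])
      (auto simp: g_def K split: prod.splits)
  then have summable_g: "g summable_on UNIV \<times> UNIV"
    by (rule abs_summable_summable)
  have "(g has_sum prod (suminf a) (suminf b)) (UNIV \<times> UNIV)"
    by (rule has_sum_SigmaI[OF _ has_sum_bounded_linear[OF bounded_linear_left has_sum_a] summable_g])
      (simp add: g_def has_sum_bounded_linear[OF bounded_linear_right has_sum_b])
  also have "?this \<longleftrightarrow> ((\<lambda>(k, i). g (i, k - i)) has_sum prod (suminf a) (suminf b))
      (SIGMA k:UNIV. {..k})"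
    by (rule has_sum_reindex_bij_witness[where i = "\<lambda>(k, i). (i, k - i)" and j = "\<lambda>(i, j). (i + j, i)"])
      auto
  finally have "((\<lambda>k. \<Sum>i\<le>k. prod (a i) (b (k - i))) has_sum prod (suminf a) (suminf b)) UNIV"
    by (rule has_sum_SigmaD) (simp add: g_def)
  then show ?thesis
    by (rule has_sum_imp_sums)
qed

lemma norm_op_pow_le: "norm (op_pow T n) \<le> norm T ^ n"
proof (induction n)
  case 0
  then show ?case by (simp add: norm_blinfun_id_le)
next
  case (Suc n)
  have "norm (op_pow T (Suc n)) \<le> norm T * norm (op_pow T n)"
    by (simp add: norm_blinfun_compose)
  also have "\<dots> \<le> norm T * norm T ^ n"
    using Suc by (simp add: mult_left_mono)
  finally show ?case by simp
qed

lemma op_pow_scaleR: "op_pow (c *\<^sub>R T) n = c ^ n *\<^sub>R op_pow T n"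
  by (induction n) (simp_all add: bounded_bilinear.scaleR_left[OF bounded_bilinear_blinfun_compose]
      bounded_bilinear.scaleR_right[OF bounded_bilinear_blinfun_compose])

lemma op_pow_add: "op_pow T i o\<^sub>L op_pow T j = op_pow T (i + j)"
proof -
  have "op_pow T i (op_pow T j x) = op_pow T (i + j) x" for x
    by (induction i) simp_all
  then show ?thesis
    by (auto intro: blinfun_eqI)
qed

lemma summable_norm_op_exp_series: "summable (\<lambda>n. norm ((1 / fact n) *\<^sub>R op_pow T n))"
proof (rule summable_comparison_test[OF _ summable_exp[of "norm T"]])
  have "norm ((1 / fact n) *\<^sub>R op_pow T n) \<le> inverse (fact n) * norm T ^ n" for n
    by (simp add: divide_inverse mult_left_mono norm_op_pow_le)
  then show "\<exists>N. \<forall>n\<ge>N. norm (norm ((1 / fact n) *\<^sub>R op_pow T n)) \<le> inverse (fact n) * norm T ^ n"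
    by simp
qed

lemma op_exp_add: "op_exp (a *\<^sub>R T) o\<^sub>L op_exp (b *\<^sub>R T) = op_exp ((a + b) *\<^sub>R T)"
proof -
  let ?u = "\<lambda>c n. (1 / fact n) *\<^sub>R op_pow (c *\<^sub>R T) n"
  have "(\<lambda>k. \<Sum>i\<le>k. ?u a i o\<^sub>L ?u b (k - i)) sums (op_exp (a *\<^sub>R T) o\<^sub>L op_exp (b *\<^sub>R T))"
    unfolding op_exp_def
    by (intro bounded_bilinear_Cauchy_product_sums bounded_bilinear_blinfun_compose
        summable_norm_op_exp_series)
  moreover have "(\<Sum>i\<le>k. ?u a i o\<^sub>L ?u b (k - i)) = ?u (a + b) k" for k
  proof -
    have "(\<Sum>i\<le>k. ?u a i o\<^sub>L ?u b (k - i))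
        = (\<Sum>i\<le>k. (a ^ i / fact i * (b ^ (k - i) / fact (k - i))) *\<^sub>R op_pow T k)"
      by (intro sum.cong refl)
        (simp add: op_pow_scaleR op_pow_add bounded_bilinear.scaleR_left[OF bounded_bilinear_blinfun_compose]
          bounded_bilinear.scaleR_right[OF bounded_bilinear_blinfun_compose] mult_ac)
    also have "\<dots> = ((a + b) ^ k / fact k) *\<^sub>R op_pow T k"
      using exp_series_add_commuting[of a b k]
      by (simp add: scaleR_sum_left[symmetric] divide_inverse mult_ac)
    finally show ?thesis
      by (simp add: op_pow_scaleR)
  qed
  ultimately show ?thesis
    unfolding op_exp_def by (simp add: sums_iff)
qed

lemma op_exp_zero: "op_exp 0 = id_blinfun"
  unfolding op_exp_def by (subst suminf_finite[where N = "{0}"]) (auto simp: gr0_conv_Suc)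

lemma op_exp_minus_compose: "op_exp (- T) o\<^sub>L op_exp T = id_blinfun"
  using op_exp_add[of "- 1" T 1] by (simp add: op_exp_zero)

lemma inj_op_exp: "inj (blinfun_apply (op_exp T))"
  by (rule inj_on_inverseI[where g = "blinfun_apply (op_exp (- T))"])
    (metis blinfun_apply_blinfun_compose blinfun_apply_id_blinfun id_apply op_exp_minus_compose)

lemma op_inv_compose:
  assumes "op_invertible T"
  shows "op_inv T o\<^sub>L T = id_blinfun" and "T o\<^sub>L op_inv T = id_blinfun"
proof -
  obtain S where S: "S o\<^sub>L T = id_blinfun" "T o\<^sub>L S = id_blinfun"
    using assms unfolding op_invertible_def by blast
  have "S' = S" if "S' o\<^sub>L T = id_blinfun" for S'
  proof (rule blinfun_eqI)
    fix y
    have "S' y = S' (T (S y))"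
      using arg_cong[OF S(2), of "\<lambda>R. R y"] by simp
    also have "\<dots> = S y"
      using arg_cong[OF that, of "\<lambda>R. R (S y)"] by simp
    finally show "S' y = S y" .
  qed
  then have "\<exists>!S. S o\<^sub>L T = id_blinfun \<and> T o\<^sub>L S = id_blinfun"
    using S by blast
  from theI'[OF this] show "op_inv T o\<^sub>L T = id_blinfun" and "T o\<^sub>L op_inv T = id_blinfun"
    unfolding op_inv_def by simp_all
qed

lemma op_invertible_apply_op_inv:
  assumes "op_invertible T"
  shows "T (op_inv T v) = v"
  using arg_cong[OF op_inv_compose(2)[OF assms], of "\<lambda>S. S v"] by simp

lemma op_invertible_inj:
  assumes "op_invertible T"
  shows "inj (blinfun_apply T)"
proof (rule inj_on_inverseI)
  show "op_inv T (T v) = v" for v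
    using arg_cong[OF op_inv_compose(1)[OF assms], of "\<lambda>S. S v"] by simp
qed

lemma op_cs_apply:
  assumes "complex_structure J"
  shows "op_cs J T v = J (T v)"
proof -
  have "bounded_linear J"
    using assms by (simp add: complex_structure_def)
  then have "bounded_linear (\<lambda>v. J (T v))"
    by (rule bounded_linear_compose) (rule blinfun.bounded_linear_right)
  then show ?thesis
    unfolding op_cs_def by (simp add: bounded_linear_Blinfun_apply)
qed

lemma cholomorphic_on_imp_continuous_on: "cholomorphic_on J1 J2 f S \<Longrightarrow> continuous_on S f"
  unfolding cholomorphic_on_def
  by (auto intro!: continuous_at_imp_continuous_on dest: has_derivative_continuous)

definition skew_product ::
  "(real \<Rightarrow> 'a \<Rightarrow> 'a) \<Rightarrow> (real \<Rightarrow> 'a \<Rightarrow> ('b::real_normed_vector \<Rightarrow>\<^sub>L 'b)) \<Rightarrow> real \<Rightarrow> 'a \<times> 'b \<Rightarrow> 'a \<times> 'b"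
  where "skew_product F \<Gamma> = (\<lambda>t (x, y). (F t x, \<Gamma> t x y))"

lemma cholomorphic_on_skew_product:
  fixes JX :: "'a::real_normed_vector \<Rightarrow> 'a" and JY :: "'b::real_normed_vector \<Rightarrow> 'b"
  assumes csY: "complex_structure JY"
    and f: "cholomorphic_on JX JX f D"
    and g: "cholomorphic_on JX (op_cs JY) g D"
    and g_clinear: "\<forall>x\<in>D. clinear_op JY (g x)"
  shows "cholomorphic_on (prod_cs JX JY) (prod_cs JX JY) (\<lambda>(x, y). (f x, g x y)) (D \<times> UNIV)"
  unfolding cholomorphic_on_def
proof
  fix p assume "p \<in> D \<times> (UNIV :: 'b set)"
  then obtain x y where p: "p = (x, y)" and x: "x \<in> D" by auto
  obtain Lf where Lf: "(f has_derivative Lf) (at x)" "\<forall>v. Lf (JX v) = JX (Lf v)"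
    using f x unfolding cholomorphic_on_def by blast
  obtain Lg where Lg: "(g has_derivative Lg) (at x)" "\<forall>v. Lg (JX v) = op_cs JY (Lg v)"
    using g x unfolding cholomorphic_on_def by blast
  let ?L = "\<lambda>(u, v). (Lf u, g x v + Lg u y)"
  have fst: "(fst has_derivative fst) (at (x, y))" and snd: "(snd has_derivative snd) (at (x, y))"
    by (simp_all add: bounded_linear_fst bounded_linear_snd bounded_linear_imp_has_derivative)
  have df: "((\<lambda>q. f (fst q)) has_derivative (\<lambda>q. Lf (fst q))) (at (x, y))"
    using has_derivative_compose[OF fst] Lf(1) by simp
  have dg: "((\<lambda>q. g (fst q)) has_derivative (\<lambda>q. Lg (fst q))) (at (x, y))"
    using has_derivative_compose[OF fst] Lg(1) by simp
  have "((\<lambda>q. g (fst q) (snd q)) has_derivative (\<lambda>q. g x (snd q) + Lg (fst q) y)) (at (x, y))"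
    using bounded_bilinear.FDERIV[OF bounded_bilinear_blinfun_apply dg snd] by simp
  with df have "((\<lambda>(x, y). (f x, g x y)) has_derivative ?L) (at p)"
    unfolding p split_def by (rule has_derivative_Pair)
  moreover have "?L (prod_cs JX JY w) = prod_cs JX JY (?L w)" for w
  proof -
    obtain u v where w: "w = (u, v)" by fastforce
    have "bounded_linear JY"
      using csY by (simp add: complex_structure_def)
    moreover have "g x (JY v) = JY (g x v)"
      using g_clinear x by (simp add: clinear_op_def)
    moreover have "Lg (JX u) y = JY (Lg u y)"
      using Lg(2) op_cs_apply[OF csY] by simp
    ultimately show ?thesis
      using Lf(2) by (simp add: w prod_cs_def linear_add[OF bounded_linear.linear])
  qed
  ultimately show "\<exists>L. ((\<lambda>(x, y). (f x, g x y)) has_derivative L) (at p) \<and>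
      (\<forall>v. L (prod_cs JX JY v) = prod_cs JX JY (L v))"
    by blast
qed

lemma skew_product_law_iff_cocycle_law:
  fixes \<Gamma> :: "real \<Rightarrow> 'a \<Rightarrow> ('b::real_normed_vector \<Rightarrow>\<^sub>L 'b)"
  assumes F_law: "\<forall>t\<ge>0. \<forall>s\<ge>0. \<forall>x\<in>D. F (t + s) x = F t (F s x)"
  shows "(\<forall>t\<ge>0. \<forall>s\<ge>0. \<forall>w\<in>D \<times> UNIV.
            skew_product F \<Gamma> (t + s) w = skew_product F \<Gamma> t (skew_product F \<Gamma> s w))
       \<longleftrightarrow> (\<forall>t\<ge>0. \<forall>s\<ge>0. \<forall>x\<in>D. \<Gamma> t (F s x) o\<^sub>L \<Gamma> s x = \<Gamma> (t + s) x)"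
proof -
  have pointwise: "skew_product F \<Gamma> (t + s) (x, y) = skew_product F \<Gamma> t (skew_product F \<Gamma> s (x, y))
      \<longleftrightarrow> (\<Gamma> t (F s x) o\<^sub>L \<Gamma> s x) y = \<Gamma> (t + s) x y"
    if "t \<ge> 0" "s \<ge> 0" "x \<in> D" for t s x y
    using F_law that by (auto simp: skew_product_def)
  show ?thesis
  proof (intro iffI allI impI ballI)
    fix t s :: real and x
    assume "\<forall>t\<ge>0. \<forall>s\<ge>0. \<forall>w\<in>D \<times> UNIV.
        skew_product F \<Gamma> (t + s) w = skew_product F \<Gamma> t (skew_product F \<Gamma> s w)"
      and "t \<ge> 0" "s \<ge> 0" "x \<in> D"
    then show "\<Gamma> t (F s x) o\<^sub>L \<Gamma> s x = \<Gamma> (t + s) x"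
      using pointwise by (intro blinfun_eqI) blast
  next
    fix t s :: real and w :: "'a \<times> 'b"
    assume "\<forall>t\<ge>0. \<forall>s\<ge>0. \<forall>x\<in>D. \<Gamma> t (F s x) o\<^sub>L \<Gamma> s x = \<Gamma> (t + s) x"
      and "t \<ge> 0" "s \<ge> 0" "w \<in> D \<times> UNIV"
    then show "skew_product F \<Gamma> (t + s) w = skew_product F \<Gamma> t (skew_product F \<Gamma> s w)"
      using pointwise by (cases w) auto
  qed
qed

lemma skew_product_tendsto_iff:
  fixes \<Gamma> :: "real \<Rightarrow> 'a::topological_space \<Rightarrow> ('b::real_normed_vector \<Rightarrow>\<^sub>L 'b)"
  assumes F_lim: "\<forall>x\<in>D. ((\<lambda>t. F t x) \<longlongrightarrow> x) (at_right 0)"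
  shows "(\<forall>w\<in>D \<times> UNIV. ((\<lambda>t. skew_product F \<Gamma> t w) \<longlongrightarrow> w) (at_right 0))
       \<longleftrightarrow> (\<forall>x\<in>D. \<forall>y. ((\<lambda>t. \<Gamma> t x y) \<longlongrightarrow> y) (at_right 0))"
proof (intro iffI ballI allI)
  fix x y
  assume "\<forall>w\<in>D \<times> UNIV. ((\<lambda>t. skew_product F \<Gamma> t w) \<longlongrightarrow> w) (at_right 0)" and "x \<in> D"
  then have "((\<lambda>t. snd (skew_product F \<Gamma> t (x, y))) \<longlongrightarrow> snd (x, y)) (at_right 0)"
    by (intro tendsto_snd) simp
  then show "((\<lambda>t. \<Gamma> t x y) \<longlongrightarrow> y) (at_right 0)"
    by (simp add: skew_product_def)
next
  fix w :: "'a \<times> 'b"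
  assume "\<forall>x\<in>D. \<forall>y. ((\<lambda>t. \<Gamma> t x y) \<longlongrightarrow> y) (at_right 0)" and "w \<in> D \<times> UNIV"
  then show "((\<lambda>t. skew_product F \<Gamma> t w) \<longlongrightarrow> w) (at_right 0)"
    using F_lim by (cases w) (simp add: skew_product_def tendsto_Pair)
qed

lemma semicocycle_iff_hsemigroup_skew_product:
  fixes JX :: "'x::real_normed_vector \<Rightarrow> 'x" and JY :: "'y::real_normed_vector \<Rightarrow> 'y"
    and \<Gamma> :: "real \<Rightarrow> 'x \<Rightarrow> ('y \<Rightarrow>\<^sub>L 'y)"
  assumes csY: "complex_structure JY"
    and sg: "hsemigroup JX D F"
    and hol: "\<forall>t\<ge>0. cholomorphic_on JX (op_cs JY) (\<Gamma> t) D"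
    and val: "\<forall>t\<ge>0. \<forall>x\<in>D. clinear_op JY (\<Gamma> t x)"
  shows "semicocycle D F \<Gamma> \<longleftrightarrow> hsemigroup (prod_cs JX JY) (D \<times> UNIV) (skew_product F \<Gamma>)"
proof -
  have F_hol: "\<forall>t\<ge>0. cholomorphic_on JX JX (F t) D \<and> F t ` D \<subseteq> D"
    and F_law: "\<forall>t\<ge>0. \<forall>s\<ge>0. \<forall>x\<in>D. F (t + s) x = F t (F s x)"
    and F_lim: "\<forall>x\<in>D. ((\<lambda>t. F t x) \<longlongrightarrow> x) (at_right 0)"
    using sg by (simp_all add: hsemigroup_def)
  have "\<forall>t\<ge>0. cholomorphic_on (prod_cs JX JY) (prod_cs JX JY) (skew_product F \<Gamma> t) (D \<times> UNIV)
      \<and> skew_product F \<Gamma> t ` (D \<times> UNIV) \<subseteq> D \<times> UNIV"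
    using F_hol hol val
    by (auto simp: skew_product_def intro!: cholomorphic_on_skew_product[OF csY])
  then show ?thesis
    unfolding hsemigroup_def semicocycle_def skew_product_law_iff_cocycle_law[OF F_law]
      skew_product_tendsto_iff[OF F_lim]
    by blast
qed

lemma inv_into_conjugate_subset_or_constant:
  fixes h :: "'a::topological_space \<Rightarrow> 'b::real_normed_vector"
  assumes D: "open D" "connected D"
    and h: "continuous_on D h" "open (h ` D)"
    and f: "continuous_on D f" "f ` D \<subseteq> D"
    and L: "continuous_on UNIV L"
    and f_eq: "\<forall>x\<in>D. f x = inv_into D h (L (h x))"
  shows "(\<forall>x\<in>D. L (h x) \<in> h ` D) \<or> (\<exists>c. \<forall>x\<in>D. f x = c)"
proof -
  define U where "U = D \<inter> (\<lambda>x. L (h x)) -` (h ` D)"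
  define V where "V = D \<inter> (\<lambda>x. h (f x) - L (h x)) -` (- {0})"
  have Lh: "continuous_on D (\<lambda>x. L (h x))"
    by (rule continuous_on_compose2[OF L h(1)]) simp
  have "open U"
    unfolding U_def by (rule continuous_open_preimage[OF Lh D(1) h(2)])
  moreover have "open V"
    unfolding V_def
    by (intro continuous_open_preimage continuous_intros continuous_on_compose2[OF h(1) f(1) f(2)]
        Lh D(1))
  moreover have "D \<subseteq> U \<union> V"
    using f(2) by (auto simp: U_def V_def) (metis image_eqI image_subset_iff)
  moreover have "U \<inter> V \<inter> D = {}"
    using f_eq by (auto simp: U_def V_def f_inv_into_f)
  ultimately have "U \<inter> D = {} \<or> V \<inter> D = {}"
    using connectedD[OF D(2)] by blast
  then show ?thesis
  proof
    assume "U \<inter> D = {}"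
    then have notin: "L (h x) \<notin> h ` D" if "x \<in> D" for x
      using that by (auto simp: U_def)
    have "f x = (SOME w. False)" if "x \<in> D" for x
    proof -
      have "(\<lambda>w. w \<in> D \<and> h w = L (h x)) = (\<lambda>w. False)"
        unfolding fun_eq_iff using notin[OF that] by (metis image_eqI)
      then show ?thesis
        using f_eq that by (simp add: inv_into_def)
    qed
    then show ?thesis
      by blast
  next
    assume "V \<inter> D = {}"
    then have "h (f x) = L (h x)" if "x \<in> D" for x
      using that by (auto simp: V_def)
    then have "\<forall>x\<in>D. L (h x) \<in> h ` D"
      using f(2) by (metis image_eqI image_subset_iff)
    then show ?thesis ..
  qed
qed

lemma open_obtain_other_point:
  fixes S :: "'a::real_normed_vector set" and v :: 'a
  assumes "open S" "a \<in> S" "v \<noteq> 0"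
  obtains b where "b \<in> S" "b \<noteq> a"
proof -
  obtain e where e: "e > 0" "ball a e \<subseteq> S"
    using assms open_contains_ball by blast
  let ?b = "a + (e / 2 / norm v) *\<^sub>R v"
  have "dist a ?b = e / 2"
    using assms(3) e(1) by (simp add: dist_norm)
  then show thesis
    using e by (intro that[of ?b]) auto
qed

lemma hsemigroup_dyadic_not_constant:
  assumes sg: "hsemigroup J D F" and "t > 0" and c: "c \<in> D" and d: "d \<in> D" "d \<noteq> c"
  shows "\<not> (\<forall>k. \<exists>e. \<forall>y\<in>D. F (t / 2 ^ k) y = e)"
proof
  assume const: "\<forall>k. \<exists>e. \<forall>y\<in>D. F (t / 2 ^ k) y = e"
  have "filterlim (\<lambda>k::nat. t / 2 ^ k) (at_right 0) sequentially"
    unfolding filterlim_at using \<open>t > 0\<close> LIMSEQ_divide_realpow_zero[of 2 t] by simp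
  then have lim: "(\<lambda>k. F (t / 2 ^ k) y) \<longlonglongrightarrow> y" if "y \<in> D" for y
    using sg that filterlim_compose by (fastforce simp: hsemigroup_def)
  have "F (t / 2 ^ k) c = F (t / 2 ^ k) d" for k
    using const c d by metis
  then have "(\<lambda>k. F (t / 2 ^ k) d) \<longlonglongrightarrow> c"
    using lim[OF c] by simp
  then show False
    using LIMSEQ_unique[OF _ lim[OF d(1)]] d(2) by blast
qed

lemma hsemigroup_conjugate_in_image:
  fixes J :: "'a::real_normed_vector \<Rightarrow> 'a" and E :: "real \<Rightarrow> 'a \<Rightarrow> 'a"
  assumes dom: "cdomain D" and sg: "hsemigroup J D F" and bh: "biholomorphic_onto J h D"
    and E_cont: "\<And>t. continuous_on UNIV (E t)" and E_inj: "\<And>t. inj (E t)" and E_0: "E 0 = id"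
    and F_eq: "\<forall>t\<ge>0. \<forall>x\<in>D. F t x = inv_into D h (E t (h x))"
    and t: "t \<ge> 0" and x: "x \<in> D"
  shows "E t (h x) \<in> h ` D"
proof (rule ccontr)
  assume out: "E t (h x) \<notin> h ` D"
  have "open D" "connected D"
    using dom by (simp_all add: cdomain_def)
  have h: "continuous_on D h" "inj_on h D" "open (h ` D)"
    using bh by (auto simp: biholomorphic_onto_def intro: cholomorphic_on_imp_continuous_on)
  have F_cont: "continuous_on D (F s)" and F_maps: "F s ` D \<subseteq> D" if "s \<ge> 0" for s
    using sg that by (auto simp: hsemigroup_def intro: cholomorphic_on_imp_continuous_on)
  have F_law: "F (s + s) y = F s (F s y)" if "s \<ge> 0" "y \<in> D" for s y
    using sg that unfolding hsemigroup_def by blast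
  have "t \<noteq> 0"
    using out x E_0 by auto
  with t have "t > 0" by simp
  have "E t (h x) - h x \<noteq> 0"
    using out x by auto
  then obtain d where d: "d \<in> D" "d \<noteq> x"
    using open_obtain_other_point[OF \<open>open D\<close> x] by blast
  define const where "const s \<longleftrightarrow> (\<exists>c. \<forall>y\<in>D. F s y = c)" for s
  have dichotomy: "(\<forall>y\<in>D. E s (h y) \<in> h ` D) \<or> const s" if "s \<ge> 0" for s
  proof -
    have "\<forall>y\<in>D. F s y = inv_into D h (E s (h y))"
      using F_eq that by blast
    then show ?thesis
      unfolding const_def
      by (rule inv_into_conjugate_subset_or_constant[OF \<open>open D\<close> \<open>connected D\<close> h(1) h(3)
            F_cont[OF that] F_maps[OF that] E_cont])
  qed
  have halve: "const s" if "const (s + s)" "s \<ge> 0" for s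
  proof (rule ccontr)
    assume "\<not> const s"
    then have hF: "h (F s y) = E s (h y)" if "y \<in> D" for y
      using dichotomy[OF \<open>s \<ge> 0\<close>] F_eq \<open>s \<ge> 0\<close> that by (simp add: f_inv_into_f)
    have "inj_on (F s) D"
    proof (rule inj_onI)
      fix y z assume "y \<in> D" "z \<in> D" "F s y = F s z"
      then have "E s (h y) = E s (h z)"
        using hF by metis
      then have "h y = h z"
        using E_inj by (simp add: inj_eq)
      then show "y = z"
        using inj_onD[OF h(2)] \<open>y \<in> D\<close> \<open>z \<in> D\<close> by blast
    qed
    then have "F s (F s x) \<noteq> F s (F s d)"
      using x d F_maps[OF \<open>s \<ge> 0\<close>] by (simp add: inj_on_eq_iff image_subset_iff)
    moreover obtain c where "\<forall>y\<in>D. F (s + s) y = c"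
      using \<open>const (s + s)\<close> unfolding const_def by blast
    ultimately show False
      using F_law[OF \<open>s \<ge> 0\<close>] x d(1) by metis
  qed
  have "const t"
    using dichotomy[OF t] out x by blast
  then have "const (t / 2 ^ k)" for k
  proof (induction k)
    case (Suc k)
    have "t / 2 ^ Suc k + t / 2 ^ Suc k = t / 2 ^ k"
      by simp
    then show ?case
      using halve[of "t / 2 ^ Suc k"] Suc t by simp
  qed simp
  then show False
    using hsemigroup_dyadic_not_constant[OF sg \<open>t > 0\<close> x d] unfolding const_def by blast
qed

lemma inj_on_fibrewise:
  assumes "inj_on h D" and "\<forall>x\<in>D. inj (M x)"
  shows "inj_on (\<lambda>(x, y). (h x, M x y)) (D \<times> UNIV)"
  using assms by (auto simp: inj_on_def)

lemma skew_product_linearization: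
  fixes h :: "'x::banach \<Rightarrow> 'x" and A :: "'x \<Rightarrow>\<^sub>L 'x"
    and M :: "'x \<Rightarrow> ('y::banach \<Rightarrow>\<^sub>L 'y)" and B0 :: "'y \<Rightarrow>\<^sub>L 'y"
  assumes dom: "cdomain D" and sg: "hsemigroup JX D F" and bh: "biholomorphic_onto JX h D"
    and F_eq: "\<forall>t\<ge>0. \<forall>x\<in>D. F t x = inv_into D h (op_exp (t *\<^sub>R A) (h x))"
    and M_inv: "\<forall>x\<in>D. op_invertible (M x)"
    and \<Gamma>_eq: "\<forall>t\<ge>0. \<forall>x\<in>D. \<Gamma> t x = op_inv (M (F t x)) o\<^sub>L op_exp (t *\<^sub>R B0) o\<^sub>L M x"
    and t: "t \<ge> 0" and x: "x \<in> D"
  shows "(F t x, \<Gamma> t x y) =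
    inv_into (D \<times> UNIV) (\<lambda>(x', y'). (h x', M x' y')) (op_exp (t *\<^sub>R A) (h x), (op_exp (t *\<^sub>R B0) o\<^sub>L M x) y)"
proof (rule inv_into_f_eq[symmetric])
  show "inj_on (\<lambda>(x', y'). (h x', M x' y')) (D \<times> UNIV)"
    using bh M_inv by (intro inj_on_fibrewise) (auto simp: biholomorphic_onto_def op_invertible_inj)
  have "F t x \<in> D"
    using sg t x by (auto simp: hsemigroup_def)
  then show "(F t x, \<Gamma> t x y) \<in> D \<times> UNIV"
    by simp
  have "op_exp (t *\<^sub>R A) (h x) \<in> h ` D"
    using hsemigroup_conjugate_in_image[OF dom sg bh _ inj_op_exp _ F_eq t x]
    by (simp add: op_exp_zero linear_continuous_on blinfun.bounded_linear_right fun_eq_iff)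
  then have "h (F t x) = op_exp (t *\<^sub>R A) (h x)"
    using F_eq t x by (simp add: f_inv_into_f)
  moreover have "M (F t x) (\<Gamma> t x y) = (op_exp (t *\<^sub>R B0) o\<^sub>L M x) y"
    using \<Gamma>_eq M_inv t x \<open>F t x \<in> D\<close> by (simp add: op_invertible_apply_op_inv)
  ultimately show "(\<lambda>(x', y'). (h x', M x' y')) (F t x, \<Gamma> t x y) =
      (op_exp (t *\<^sub>R A) (h x), (op_exp (t *\<^sub>R B0) o\<^sub>L M x) y)"
    by simp
qed

theorem proposition3p3:
  fixes JX :: "'x::banach \<Rightarrow> 'x" and JY :: "'y::banach \<Rightarrow> 'y"
    and D :: "'x set"
    and F :: "real \<Rightarrow> 'x \<Rightarrow> 'x"
    and \<Gamma> :: "real \<Rightarrow> 'x \<Rightarrow> ('y \<Rightarrow>\<^sub>L 'y)"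
  assumes csX: "complex_structure JX" and csY: "complex_structure JY"
    and dom: "cdomain D"
    and sg: "hsemigroup JX D F"
    and hol: "\<forall>t\<ge>0. cholomorphic_on JX (op_cs JY) (\<Gamma> t) D"
    and val: "\<forall>t\<ge>0. \<forall>x\<in>D. clinear_op JY (\<Gamma> t x)"
  shows "(semicocycle D F \<Gamma> \<longleftrightarrow>
            hsemigroup (prod_cs JX JY) (D \<times> UNIV)
              (\<lambda>t (x, y). (F t x, blinfun_apply (\<Gamma> t x) y)))
       \<and> (\<forall>h A M B0.
            biholomorphic_onto JX h D \<and>
            clinear_op JX A \<and>
            (\<forall>t\<ge>0. \<forall>x\<in>D. F t x = inv_into D h (blinfun_apply (op_exp (t *\<^sub>R A)) (h x))) \<and>
            cholomorphic_on JX (op_cs JY) M D \<and>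
            (\<forall>x\<in>D. clinear_op JY (M x) \<and> op_invertible (M x)) \<and>
            clinear_op JY B0 \<and>
            (\<forall>t\<ge>0. \<forall>x\<in>D. \<Gamma> t x = op_inv (M (F t x)) o\<^sub>L op_exp (t *\<^sub>R B0) o\<^sub>L M x)
          \<longrightarrow> (\<forall>t\<ge>0. \<forall>x\<in>D. \<forall>y.
                (F t x, blinfun_apply (\<Gamma> t x) y) =
                inv_into (D \<times> UNIV) (\<lambda>(x', y'). (h x', blinfun_apply (M x') y'))
                  (blinfun_apply (op_exp (t *\<^sub>R A)) (h x),
                   blinfun_apply (op_exp (t *\<^sub>R B0) o\<^sub>L M x) y)))"
proof -
  have "semicocycle D F \<Gamma> \<longleftrightarrow> hsemigroup (prod_cs JX JY) (D \<times> UNIV) (skew_product F \<Gamma>)"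
    by (rule semicocycle_iff_hsemigroup_skew_product[OF csY sg hol val])
  then show ?thesis
    unfolding skew_product_def using skew_product_linearization[OF dom sg] by blast
qed

end
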